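(* Let $n\ge1$, let $\Delta\subset\mathbb{R}^n$ be an $n$-simplex with vertices $\mathbf{x}_0,\dots,\mathbf{x}_n$, and let $f\colon\Delta\to\mathbb{R}$ be convex. Then $$\operatorname{Avg}(f,\Delta)\le \alpha_n\frac{1}{\binom{n+1}{2}}\sum_{0\le i<j\le n}f\!\left(\frac{\mathbf{x}_i+\mathbf{x}_j}{2}\right)+\beta_n\frac{f(\mathbf{x}_0)+\dots+f(\mathbf{x}_n)}{n+1},$$ where $\alpha_n=\frac{\lfloor (n+1)/2\rfloor}{n+1}$ and $\beta_n=\frac{\lceil (n+1)/2\rceil}{n+1}$.
   Context: $\mathbf{x}_0,\dots,\mathbf{x}_n\in\mathbb{R}^n$ are affinely independent and $\Delta=\operatorname{conv}\{\mathbf{x}_0,\dots,\mathbf{x}_n\}$. $\operatorname{Avg}(f,\Delta)=\frac{1}{\operatorname{Vol}_n(\Delta)}\int_\Delta f(\mathbf{x})\,d\mathbf{x}$ (Lebesgue measure on $\mathbb{R}^n$). *)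

theory Defs
  imports "HOL-Analysis.Analysis"
begin

definition Avg :: "('a::euclidean_space \<Rightarrow> real) \<Rightarrow> 'a set \<Rightarrow> real" where
  "Avg f S = (LINT x : S | lborel. f x) / measure lborel S"

end

theory Submission
  imports Defs
begin

text \<open>
  Write \<open>\<lambda>\<^sub>0, \<dots>, \<lambda>\<^sub>n\<close> for the barycentric coordinates on \<open>\<Delta>\<close>. For a parameter
  \<open>0 \<le> c \<le> 1/n\<close>, every point \<open>p\<close> is a convex combination of the vertices and the edge
  midpoints, with weight \<open>c min(\<lambda>\<^sub>i p, \<lambda>\<^sub>j p)\<close> on \<open>(x\<^sub>i + x\<^sub>j)/2\<close> and the remaining mass
  \<open>\<lambda>\<^sub>i p - c \<Sum>\<^sub>k\<^sub>\<noteq>\<^sub>i min(\<lambda>\<^sub>i p, \<lambda>\<^sub>k p)\<close> on \<open>x\<^sub>i\<close>. Jensen's inequality at every point, integrated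
  over \<open>\<Delta>\<close>, bounds the average of \<open>f\<close> by a combination of vertex and midpoint values whose
  coefficients are the averages of these weights. By the symmetry of \<open>\<Delta>\<close> under exchanging two
  vertices, \<open>\<lambda>\<^sub>i\<close> has average \<open>1/(n+1)\<close>; splitting \<open>\<Delta>\<close> along \<open>\<lambda>\<^sub>i = \<lambda>\<^sub>j\<close> and shearing one half
  onto \<open>\<Delta>\<close> shows that \<open>min(\<lambda>\<^sub>i, \<lambda>\<^sub>j)\<close> has average \<open>1/(2(n+1))\<close>. The stated bound is the
  case \<open>c = 2\<lfloor>(n+1)/2\<rfloor> / (n(n+1))\<close>.
\<close>

section \<open>Integration and measure on Euclidean spaces\<close>

lemma integrable_on_compact_continuous:
  fixes h :: "'a::euclidean_space \<Rightarrow> 'b::euclidean_space"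
  assumes "compact K" "continuous_on K h"
  shows "h integrable_on K"
  by (metis assms borel_integrable_compact set_borel_integral_eq_integral(1) set_integrable_def)

lemma absolutely_integrable_on_compact_continuous:
  fixes h :: "'a::euclidean_space \<Rightarrow> 'b::euclidean_space"
  assumes "compact K" "continuous_on K h"
  shows "h absolutely_integrable_on K"
  unfolding absolutely_integrable_on_def
  using assms by (auto intro!: integrable_on_compact_continuous continuous_intros)

lemma integral_affine_image:
  fixes g :: "(real, 'm::{finite,wellorder}) vec \<Rightarrow> (real, 'm) vec" and h :: "(real, 'm) vec \<Rightarrow> real"
  assumes lin: "linear (\<lambda>p. g p - g 0)" and S: "compact S" and inj: "inj_on g S"
    and h: "continuous_on (g ` S) h"
  shows "integral (g ` S) h = \<bar>det (matrix (\<lambda>p. g p - g 0))\<bar> * integral S (\<lambda>p. h (g p))"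
proof -
  define G where "G = (\<lambda>p. g p - g 0)"
  have "((\<lambda>p. G p + g 0) has_derivative G) (at p within S)" for p
    unfolding G_def by (intro has_derivative_add_const linear_imp_has_derivative lin)
  then have der: "(g has_derivative G) (at p within S)" for p
    by (simp add: G_def)
  have "compact (g ` S)"
    using S der by (intro compact_continuous_image has_derivative_continuous_on) auto
  \<comment> \<open>The change of variables theorem is stated for vector-valued integrands.\<close>
  define H where "H = (\<lambda>y. h y *\<^sub>R (axis 1 1 :: real^1))"
  have "H absolutely_integrable_on (g ` S)"
    unfolding H_def by (intro absolutely_integrable_on_compact_continuous continuous_intros
        \<open>compact (g ` S)\<close> h)
  with has_absolute_integral_change_of_variables_compact[OF S der inj, of H "integral (g ` S) H"]
  have eq: "integral S (\<lambda>p. \<bar>det (matrix G)\<bar> *\<^sub>R H (g p)) = integral (g ` S) H"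
    and int: "(\<lambda>p. \<bar>det (matrix G)\<bar> *\<^sub>R H (g p)) absolutely_integrable_on S"
    by blast+
  have "integral (g ` S) h = integral (g ` S) H $ 1"
    using integral_component_eq_cart[OF set_lebesgue_integral_eq_integral(1)
        [OF \<open>H absolutely_integrable_on (g ` S)\<close>], of 1]
    by (simp add: H_def)
  also have "\<dots> = integral S (\<lambda>p. \<bar>det (matrix G)\<bar> * h (g p))"
    using integral_component_eq_cart[OF set_lebesgue_integral_eq_integral(1)[OF int], of 1] eq
    by (simp add: H_def)
  finally show ?thesis
    by (simp add: G_def)
qed

lemma integral_Un_negligible:
  fixes h :: "'a::euclidean_space \<Rightarrow> real"
  assumes "h integrable_on A" "h integrable_on B" "negligible (A \<inter> B)"
  shows "integral (A \<union> B) h = integral A h + integral B h"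
  using has_integral_Un[OF integrable_integral[OF assms(1)] integrable_integral[OF assms(2)] assms(3)]
  by (rule integral_unique)

lemma negligible_level_set_linear:
  fixes l :: "'a::euclidean_space \<Rightarrow> real"
  assumes "linear l" "l u \<noteq> l v"
  shows "negligible {p. l p = b}"
proof -
  define a where "a = adjoint l 1"
  have l: "l p = a \<bullet> p" for p
    using adjoint_works[OF assms(1), of p 1] by (simp add: a_def inner_commute)
  then have "a \<noteq> 0"
    using assms(2) by auto
  then have "negligible {p. a \<bullet> p = b}"
    by (simp add: negligible_hyperplane)
  then show ?thesis
    by (simp add: l)
qed

lemma borel_measurable_linear:
  fixes f :: "'a::euclidean_space \<Rightarrow> 'b::euclidean_space"
  assumes "linear f"
  shows "f \<in> borel_measurable borel"
  using assms by (auto intro!: borel_measurable_continuous_onI linear_continuous_on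
      simp: linear_conv_bounded_linear)

lemma prod_Basis_vec: "(\<Prod>b\<in>(Basis :: (real, 'n::finite) vec set). w \<bullet> b) = (\<Prod>i\<in>UNIV. w $ i)"
proof -
  have "(Basis :: (real, 'n) vec set) = (\<lambda>i. axis i 1) ` UNIV"
    by (auto simp: Basis_vec_def)
  moreover have "inj (\<lambda>i::'n. axis i (1::real))"
    by (simp add: inj_on_def axis_eq_axis)
  ultimately have "(\<Prod>b\<in>(Basis :: (real, 'n) vec set). w \<bullet> b) = (\<Prod>i\<in>UNIV. w \<bullet> axis i 1)"
    using prod.reindex[of "\<lambda>i. axis i 1" UNIV "\<lambda>b. w \<bullet> b"] by (simp add: o_def)
  then show ?thesis
    by (simp add: inner_axis)
qed

lemma distr_lborel_vec_reindex:
  fixes \<pi> :: "'b::finite \<Rightarrow> 'a::finite"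
  assumes "bij \<pi>"
  shows "distr lborel borel (\<lambda>v::(real, 'a) vec. (\<chi> i. v $ \<pi> i) :: (real, 'b) vec) = lborel"
proof (rule lborel_eqI[symmetric])
  let ?R = "\<lambda>v::(real, 'a) vec. (\<chi> i. v $ \<pi> i) :: (real, 'b) vec"
  have "linear ?R"
    by (rule linearI) (simp_all add: vec_eq_iff)
  then have R: "?R \<in> lborel \<rightarrow>\<^sub>M borel"
    using borel_measurable_linear by simp
  fix l u :: "(real, 'b) vec"
  assume le: "\<And>b. b \<in> Basis \<Longrightarrow> l \<bullet> b \<le> u \<bullet> b"
  define l' where "l' = (\<chi> j. l $ inv \<pi> j)"
  define u' where "u' = (\<chi> j. u $ inv \<pi> j)"
  have pi: "\<pi> (inv \<pi> j) = j" "inv \<pi> (\<pi> i) = i" for i j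
    using assms by (simp_all add: bij_is_surj surj_f_inv_f bij_is_inj)
  have "?R v \<in> box l u \<longleftrightarrow> v \<in> box l' u'" for v
    unfolding mem_box_cart l'_def u'_def by (metis pi vec_lambda_beta)
  then have preimage: "?R -` box l u = box l' u'"
    by auto
  have le': "l' \<bullet> b \<le> u' \<bullet> b" if "b \<in> Basis" for b
  proof -
    obtain j where b: "b = axis j 1"
      using \<open>b \<in> Basis\<close> by (auto simp: Basis_vec_def)
    then show ?thesis
      using le[of "axis (inv \<pi> j) 1"] by (auto simp: l'_def u'_def inner_axis Basis_vec_def)
  qed
  have "emeasure (distr lborel borel ?R) (box l u) = emeasure lborel (box l' u')"
    using R by (simp add: emeasure_distr preimage)
  also have "\<dots> = ennreal (\<Prod>j\<in>UNIV. u $ inv \<pi> j - l $ inv \<pi> j)"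
    using le' by (simp add: emeasure_lborel_box prod_Basis_vec l'_def u'_def)
  also have "(\<Prod>j\<in>UNIV. u $ inv \<pi> j - l $ inv \<pi> j) = (\<Prod>i\<in>UNIV. u $ i - l $ i)"
    using bij_imp_bij_inv[OF assms] by (rule prod.reindex_bij_betw)
  finally show "emeasure (distr lborel borel ?R) (box l u) = ennreal (\<Prod>b\<in>Basis. (u - l) \<bullet> b)"
    by (simp add: prod_Basis_vec)
qed simp

lemma Avg_measure_preserving_image:
  fixes T :: "'a::euclidean_space \<Rightarrow> 'b::euclidean_space" and U :: "'b \<Rightarrow> 'a"
  assumes T: "T \<in> borel_measurable borel" and U: "U \<in> borel_measurable borel"
    and UT: "\<And>v. U (T v) = v" and TU: "\<And>w. T (U w) = w"
    and distr: "distr lborel borel T = lborel" and A: "A \<in> sets borel"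
  shows "Avg g (T ` A) = Avg (\<lambda>v. g (T v)) A"
proof -
  have T_lborel: "T \<in> lborel \<rightarrow>\<^sub>M borel"
    using T by simp
  have image: "T ` A = U -` A"
  proof (intro equalityI subsetI)
    show "w \<in> U -` A" if "w \<in> T ` A" for w
      using that UT by auto
    show "w \<in> T ` A" if "w \<in> U -` A" for w
      using that TU[of w] by (metis imageI vimageE)
  qed
  have preimage: "T -` (T ` A) = A"
    using UT by (metis injI inj_vimage_image_eq)
  have TA: "T ` A \<in> sets borel"
    unfolding image using measurable_sets[OF U A] by simp
  have "measure lborel (T ` A) = measure (distr lborel borel T) (T ` A)"
    by (simp add: distr)
  also have "\<dots> = measure lborel A"
    using TA by (simp add: measure_distr[OF T_lborel] preimage)
  finally have measure_eq: "measure lborel (T ` A) = measure lborel A" .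
  define G where "G w = indicator (T ` A) w *\<^sub>R g w" for w
  have G_T: "G (T v) = indicator A v *\<^sub>R g (T v)" for v
    using preimage by (auto simp: G_def indicator_def)
  have "(LINT w:T ` A|lborel. g w) = integral\<^sup>L lborel G"
    by (simp add: set_lebesgue_integral_def G_def[abs_def])
  also have "\<dots> = integral\<^sup>L lborel (\<lambda>v. G (T v))"
  proof (cases "G \<in> borel_measurable borel")
    case True
    then show ?thesis
      using integral_distr[OF T_lborel True] by (simp add: distr)
  next
    case False
    moreover have "(\<lambda>v. G (T v)) \<notin> borel_measurable borel"
    proof
      assume "(\<lambda>v. G (T v)) \<in> borel_measurable borel"
      then have "(\<lambda>w. G (T (U w))) \<in> borel_measurable borel"
        using U by (rule measurable_compose[rotated])
      with False show False
        by (simp add: TU)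
    qed
    ultimately have "\<not> integrable lborel G" "\<not> integrable lborel (\<lambda>v. G (T v))"
      by (auto dest: borel_measurable_integrable)
    then show ?thesis
      by (simp add: not_integrable_integral_eq)
  qed
  also have "\<dots> = (LINT v:A|lborel. g (T v))"
    by (simp add: set_lebesgue_integral_def G_T)
  finally show ?thesis
    by (simp add: Avg_def measure_eq)
qed

lemma linear_add_scaled:
  fixes l :: "'a::real_vector \<Rightarrow> real"
  assumes "linear l"
  shows "linear (\<lambda>p. p + l p *\<^sub>R v)"
proof (rule linearI)
  fix p q :: 'a and c :: real
  show "p + q + l (p + q) *\<^sub>R v = p + l p *\<^sub>R v + (q + l q *\<^sub>R v)"
    using linear_add[OF assms] by (simp add: algebra_simps)
  show "c *\<^sub>R p + l (c *\<^sub>R p) *\<^sub>R v = c *\<^sub>R (p + l p *\<^sub>R v)"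
    using linear_scale[OF assms] by (simp add: algebra_simps)
qed

lemma affine_independent_linear_image:
  fixes T :: "'a::euclidean_space \<Rightarrow> 'b::euclidean_space"
  assumes "linear T" "inj T" "\<not> affine_dependent S"
  shows "\<not> affine_dependent (T ` S)"
proof
  assume "affine_dependent (T ` S)"
  then obtain a where a: "a \<in> S" "T a \<in> affine hull (T ` S - {T a})"
    by (auto simp: affine_dependent_def)
  have "T ` S - {T a} = T ` (S - {a})"
    using assms(2) by (auto simp: inj_eq)
  also have "affine hull \<dots> = T ` (affine hull (S - {a}))"
    by (rule affine_hull_linear_image[symmetric]) (simp add: assms(1) flip: linear_conv_bounded_linear)
  finally have "a \<in> affine hull (S - {a})"
    using a(2) assms(2) by (auto simp: inj_eq)
  then show False
    using assms(3) a(1) by (auto simp: affine_dependent_def)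
qed

lemma convex_on_linear_vimage:
  assumes "linear U" "convex_on S f"
  shows "convex_on (U -` S) (\<lambda>w. f (U w))"
proof (rule convex_onI)
  show "convex (U -` S)"
    using assms by (intro convex_linear_vimage convex_on_imp_convex)
  fix t :: real and v w
  assume "0 < t" "t < 1" "v \<in> U -` S" "w \<in> U -` S"
  then show "f (U ((1 - t) *\<^sub>R v + t *\<^sub>R w)) \<le> (1 - t) * f (U v) + t * f (U w)"
    using convex_onD[OF assms(2), of t "U v" "U w"]
    by (simp add: linear_add[OF assms(1)] linear_scale[OF assms(1)])
qed

lemma sum_symmetric_midpoints:
  fixes w :: "'i \<Rightarrow> 'i \<Rightarrow> real" and y :: "'i \<Rightarrow> 'a::real_vector"
  assumes "\<And>i j. w i j = w j i"
  shows "(\<Sum>i\<in>A. \<Sum>j\<in>A. w i j *\<^sub>R ((y i + y j) /\<^sub>R 2)) = (\<Sum>i\<in>A. (\<Sum>j\<in>A. w i j) *\<^sub>R y i)"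
proof -
  have "(\<Sum>i\<in>A. \<Sum>j\<in>A. w i j *\<^sub>R y j) = (\<Sum>i\<in>A. \<Sum>j\<in>A. w j i *\<^sub>R y j)"
    using assms by simp
  also have "\<dots> = (\<Sum>i\<in>A. \<Sum>j\<in>A. w i j *\<^sub>R y i)"
    by (rule sum.swap)
  finally have swap: "(\<Sum>i\<in>A. \<Sum>j\<in>A. w i j *\<^sub>R y j) = (\<Sum>i\<in>A. \<Sum>j\<in>A. w i j *\<^sub>R y i)" .
  have "(\<Sum>i\<in>A. \<Sum>j\<in>A. w i j *\<^sub>R ((y i + y j) /\<^sub>R 2))
      = (1/2::real) *\<^sub>R (\<Sum>i\<in>A. \<Sum>j\<in>A. w i j *\<^sub>R y i)
        + (1/2::real) *\<^sub>R (\<Sum>i\<in>A. \<Sum>j\<in>A. w i j *\<^sub>R y j)"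
    by (simp add: scaleR_add_right sum.distrib scaleR_sum_right)
  also have "\<dots> = (\<Sum>i\<in>A. (\<Sum>j\<in>A. w i j) *\<^sub>R y i)"
    unfolding swap by (simp add: scaleR_sum_left flip: scaleR_add_left)
  finally show ?thesis .
qed

lemma sum_square_symmetric:
  fixes g :: "nat \<Rightarrow> nat \<Rightarrow> real"
  assumes "\<And>i j. g i j = g j i"
  shows "(\<Sum>i\<in>{0..m}. \<Sum>j\<in>{0..m}. g i j)
    = (\<Sum>i\<in>{0..m}. g i i) + 2 * (\<Sum>j\<in>{0..m}. \<Sum>i\<in>{0..<j}. g i j)"
proof (induction m)
  case (Suc m)
  have "(\<Sum>j\<in>{0..m}. g (Suc m) j) = (\<Sum>i\<in>{0..m}. g i (Suc m))"
    using assms by simp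
  with Suc show ?case
    by (simp add: sum.distrib atLeastLessThanSuc_atLeastAtMost)
qed simp

section \<open>Barycentric coordinates\<close>

locale barycentric =
  fixes n :: nat and x :: "nat \<Rightarrow> (real, 'm::{finite,wellorder}) vec"
    and lam :: "nat \<Rightarrow> (real, 'm) vec \<Rightarrow> real"
  assumes n_eq: "n = CARD('m)"
    and linear_lam: "\<And>k. linear (\<lambda>p. lam k p - lam k 0)"
    and lam_vertex: "\<And>k j. k \<le> n \<Longrightarrow> j \<le> n \<Longrightarrow> lam k (x j) = (if k = j then 1 else 0)"
    and sum_lam: "\<And>p. (\<Sum>k\<in>{0..n}. lam k p) = 1"
    and sum_lam_vertices: "\<And>p. (\<Sum>k\<in>{0..n}. lam k p *\<^sub>R x k) = p"
    and affine_independent: "\<not> affine_dependent (x ` {0..n})"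
begin

definition \<Delta> :: "(real, 'm) vec set"
  where "\<Delta> = convex hull (x ` {0..n})"

definition vol :: real
  where "vol = measure lborel \<Delta>"

lemma lam_add_scaled: "lam k (p + t *\<^sub>R (u - v)) = lam k p + t * (lam k u - lam k v)"
proof -
  define l where "l = (\<lambda>p. lam k p - lam k 0)"
  have "linear l"
    unfolding l_def by (rule linear_lam)
  then have "l (p + t *\<^sub>R (u - v)) = l p + t * (l u - l v)"
    by (simp add: linear_add linear_scale linear_diff)
  then show ?thesis
    by (simp add: l_def algebra_simps)
qed

lemma lam_sum_vertices:
  assumes "sum \<mu> {0..n} = 1" "k \<le> n"
  shows "lam k (\<Sum>j\<in>{0..n}. \<mu> j *\<^sub>R x j) = \<mu> k"
proof -
  have "lam k (\<Sum>j\<in>{0..n}. \<mu> j *\<^sub>R x j) - lam k 0 = (\<Sum>j\<in>{0..n}. \<mu> j * (lam k (x j) - lam k 0))"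
    using linear_sum[OF linear_lam[of k], of "\<lambda>j. \<mu> j *\<^sub>R x j" "{0..n}"]
      linear_scale[OF linear_lam[of k]]
    by simp
  also have "\<dots> = (\<Sum>j\<in>{0..n}. \<mu> j * lam k (x j)) - lam k 0"
    using assms(1) by (simp add: algebra_simps sum_subtractf flip: sum_distrib_right)
  also have "(\<Sum>j\<in>{0..n}. \<mu> j * lam k (x j)) = (\<Sum>j\<in>{0..n}. if j = k then \<mu> j else 0)"
    using assms(2) by (intro sum.cong) (auto simp: lam_vertex)
  also have "\<dots> = \<mu> k"
    using assms(2) by simp
  finally show ?thesis
    by simp
qed

lemma lam_inject:
  assumes "\<And>k. k \<le> n \<Longrightarrow> lam k p = lam k q"
  shows "p = q"
proof -
  have "p = (\<Sum>k\<in>{0..n}. lam k p *\<^sub>R x k)"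
    by (rule sum_lam_vertices[symmetric])
  also have "\<dots> = (\<Sum>k\<in>{0..n}. lam k q *\<^sub>R x k)"
    using assms by (intro sum.cong) auto
  finally show ?thesis
    by (simp add: sum_lam_vertices)
qed

lemma inj_on_vertices: "inj_on x {0..n}"
proof (rule inj_onI)
  fix i j assume "i \<in> {0..n}" "j \<in> {0..n}" "x i = x j"
  then show "i = j"
    using lam_vertex[of i i] lam_vertex[of i j] by (auto split: if_splits)
qed

lemma simplex_eq: "\<Delta> = {p. \<forall>k\<le>n. 0 \<le> lam k p}"
proof (intro equalityI subsetI CollectI allI impI)
  fix p k assume "p \<in> \<Delta>" "k \<le> n"
  then obtain u where u: "\<forall>y\<in>x ` {0..n}. 0 \<le> u y" "sum u (x ` {0..n}) = 1"
      "(\<Sum>y\<in>x ` {0..n}. u y *\<^sub>R y) = p"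
    unfolding \<Delta>_def by (auto simp: convex_hull_finite)
  have "sum (u \<circ> x) {0..n} = 1"
    using u(2) sum.reindex[OF inj_on_vertices, of u] by simp
  moreover have "(\<Sum>j\<in>{0..n}. (u \<circ> x) j *\<^sub>R x j) = p"
    using u(3) sum.reindex[OF inj_on_vertices, of "\<lambda>y. u y *\<^sub>R y"] by simp
  ultimately
  show "0 \<le> lam k p"
    using lam_sum_vertices[of "u \<circ> x" k] u(1) \<open>k \<le> n\<close> by auto
next
  fix p assume p: "p \<in> {p. \<forall>k\<le>n. 0 \<le> lam k p}"
  have "(\<Sum>k\<in>{0..n}. lam k p *\<^sub>R x k) \<in> \<Delta>"
    unfolding \<Delta>_def by (rule convex_sum) (use p in \<open>auto intro: hull_inc simp: sum_lam\<close>)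
  then show "p \<in> \<Delta>"
    by (simp add: sum_lam_vertices)
qed

lemma lam_nonneg: "p \<in> \<Delta> \<Longrightarrow> k \<le> n \<Longrightarrow> 0 \<le> lam k p"
  by (simp add: simplex_eq)

lemma lam_le_1:
  assumes "p \<in> \<Delta>" "k \<le> n"
  shows "lam k p \<le> 1"
proof -
  have "lam k p \<le> (\<Sum>j\<in>{0..n}. lam j p)"
    using assms lam_nonneg by (intro member_le_sum) auto
  then show ?thesis
    by (simp add: sum_lam)
qed

lemma continuous_on_lam [continuous_intros]: "continuous_on A (lam k)"
proof -
  have "continuous_on A (\<lambda>p. (lam k p - lam k 0) + lam k 0)"
    by (intro continuous_intros linear_continuous_on)
      (simp add: linear_lam flip: linear_conv_bounded_linear)
  then show ?thesis
    by simp
qed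

lemma compact_simplex: "compact \<Delta>"
  unfolding \<Delta>_def by (intro compact_convex_hull finite_imp_compact) auto

lemma vertex_in_simplex: "j \<le> n \<Longrightarrow> x j \<in> \<Delta>"
  unfolding \<Delta>_def by (auto intro: hull_inc)

lemma midpoint_in_simplex:
  assumes "i \<le> n" "j \<le> n"
  shows "(x i + x j) /\<^sub>R 2 \<in> \<Delta>"
proof -
  have "(x i + x j) /\<^sub>R 2 = (1/2::real) *\<^sub>R x i + (1/2::real) *\<^sub>R x j"
    by (simp add: scaleR_add_right)
  also have "\<dots> \<in> \<Delta>"
    unfolding \<Delta>_def using vertex_in_simplex[OF assms(1)] vertex_in_simplex[OF assms(2)]
    by (intro convexD convex_convex_hull) (auto simp: \<Delta>_def)
  finally show ?thesis .
qed

lemma closed_simplex: "closed \<Delta>"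
  by (rule compact_imp_closed[OF compact_simplex])

lemma measure_lebesgue_simplex: "measure lebesgue \<Delta> = vol"
  unfolding vol_def using closed_simplex by (intro measure_completion) simp

lemma vol_eq_integral: "vol = integral \<Delta> (\<lambda>_. 1)"
  using lmeasure_integral[OF lmeasurable_compact[OF compact_simplex]]
  by (simp add: measure_lebesgue_simplex)

lemma vol_pos: "0 < vol"
proof -
  have "card (x ` {0..n}) = Suc DIM((real, 'm) vec)"
    using card_image[OF inj_on_vertices] by (simp add: n_eq)
  then have "interior \<Delta> \<noteq> {}"
    using interior_convex_hull_eq_empty affine_independent unfolding \<Delta>_def by blast
  then obtain c e where "0 < e" "ball c e \<subseteq> \<Delta>"
    by (meson all_not_in_conv mem_interior)
  then have "0 < measure lebesgue (ball c e)"
    using content_ball_pos by (simp add: measure_completion)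
  also have "\<dots> \<le> measure lebesgue \<Delta>"
    using \<open>ball c e \<subseteq> \<Delta>\<close> compact_simplex
    by (intro measure_mono_fmeasurable) (auto simp: lmeasurable_compact)
  finally show ?thesis
    by (simp add: measure_lebesgue_simplex)
qed

lemma integrable_on_simplex:
  fixes h :: "(real, 'm) vec \<Rightarrow> real"
  assumes "continuous_on UNIV h"
  shows "h integrable_on \<Delta>"
  using compact_simplex continuous_on_subset[OF assms subset_UNIV[of \<Delta>]]
  by (rule integrable_on_compact_continuous)

subsection \<open>Symmetries of the simplex\<close>

definition swap_map :: "nat \<Rightarrow> nat \<Rightarrow> (real, 'm) vec \<Rightarrow> (real, 'm) vec"
  where "swap_map i j p = p + (lam j p - lam i p) *\<^sub>R (x i - x j)"

definition shear_map :: "nat \<Rightarrow> nat \<Rightarrow> (real, 'm) vec \<Rightarrow> (real, 'm) vec"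
  where "shear_map i j p = p + lam j p *\<^sub>R (x j - x i)"

definition half_simplex :: "nat \<Rightarrow> nat \<Rightarrow> (real, 'm) vec set"
  where "half_simplex i j = {p \<in> \<Delta>. lam j p \<le> lam i p}"

lemma lam_swap_map:
  assumes "i \<le> n" "j \<le> n" "i \<noteq> j" "k \<le> n"
  shows "lam k (swap_map i j p) = (if k = i then lam j p else if k = j then lam i p else lam k p)"
  using assms unfolding swap_map_def by (simp add: lam_add_scaled lam_vertex)

lemma lam_shear_map:
  assumes "i \<le> n" "j \<le> n" "i \<noteq> j" "k \<le> n"
  shows "lam k (shear_map i j p)
    = (if k = i then lam i p - lam j p else if k = j then 2 * lam j p else lam k p)"
  using assms unfolding shear_map_def by (simp add: lam_add_scaled lam_vertex)

lemma swap_map_swap_map: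
  assumes "i \<le> n" "j \<le> n" "i \<noteq> j"
  shows "swap_map i j (swap_map i j p) = p"
  by (rule lam_inject) (use assms in \<open>simp add: lam_swap_map\<close>)

lemma inj_shear_map:
  assumes "i \<le> n" "j \<le> n" "i \<noteq> j"
  shows "inj (shear_map i j)"
proof (rule injI)
  fix p q assume eq: "shear_map i j p = shear_map i j q"
  have j: "lam j p = lam j q"
    using arg_cong[OF eq, of "lam j"] assms by (simp add: lam_shear_map)
  show "p = q"
  proof (rule lam_inject)
    fix k assume "k \<le> n"
    then show "lam k p = lam k q"
      using arg_cong[OF eq, of "lam k"] assms j by (simp add: lam_shear_map split: if_splits)
  qed
qed

lemma linear_swap_map: "linear (\<lambda>p. swap_map i j p - swap_map i j 0)"
proof -
  have "(\<lambda>p. swap_map i j p - swap_map i j 0)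
      = (\<lambda>p. p + ((lam j p - lam j 0) - (lam i p - lam i 0)) *\<^sub>R (x i - x j))"
    by (simp add: swap_map_def fun_eq_iff algebra_simps)
  then show ?thesis
    using linear_add_scaled[OF linear_compose_sub[OF linear_lam linear_lam]] by simp
qed

lemma linear_shear_map: "linear (\<lambda>p. shear_map i j p - shear_map i j 0)"
proof -
  have "(\<lambda>p. shear_map i j p - shear_map i j 0) = (\<lambda>p. p + (lam j p - lam j 0) *\<^sub>R (x j - x i))"
    by (simp add: shear_map_def fun_eq_iff algebra_simps)
  then show ?thesis
    using linear_add_scaled[OF linear_lam] by simp
qed

lemma swap_map_image:
  assumes "i \<le> n" "j \<le> n" "i \<noteq> j"
  shows "swap_map i j ` {p \<in> \<Delta>. P (lam i p) (lam j p)} = {p \<in> \<Delta>. P (lam j p) (lam i p)}"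
proof -
  have mem: "swap_map i j p \<in> \<Delta>" if "p \<in> \<Delta>" for p
    using that assms by (auto simp: simplex_eq lam_swap_map)
  have lam: "lam i (swap_map i j p) = lam j p" "lam j (swap_map i j p) = lam i p" for p
    using assms by (simp_all add: lam_swap_map)
  show ?thesis
  proof (intro equalityI subsetI)
    fix q assume "q \<in> swap_map i j ` {p \<in> \<Delta>. P (lam i p) (lam j p)}"
    then obtain p where "p \<in> \<Delta>" "P (lam i p) (lam j p)" "q = swap_map i j p"
      by blast
    then show "q \<in> {p \<in> \<Delta>. P (lam j p) (lam i p)}"
      using mem lam by simp
  next
    fix q assume q: "q \<in> {p \<in> \<Delta>. P (lam j p) (lam i p)}"
    then have "swap_map i j q \<in> {p \<in> \<Delta>. P (lam i p) (lam j p)}"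
      using mem lam by simp
    moreover have "q = swap_map i j (swap_map i j q)"
      by (simp add: swap_map_swap_map assms)
    ultimately show "q \<in> swap_map i j ` {p \<in> \<Delta>. P (lam i p) (lam j p)}"
      by (rule rev_image_eqI)
  qed
qed

lemma swap_map_simplex:
  assumes "i \<le> n" "j \<le> n" "i \<noteq> j"
  shows "swap_map i j ` \<Delta> = \<Delta>"
  using swap_map_image[OF assms, of "\<lambda>_ _. True"] by (simp only: simp_thms Collect_mem_eq)

lemma swap_map_half_simplex:
  assumes "i \<le> n" "j \<le> n" "i \<noteq> j"
  shows "swap_map i j ` half_simplex i j = half_simplex j i"
  using swap_map_image[OF assms, of "\<lambda>a b. b \<le> a"] by (simp add: half_simplex_def)

lemma shear_map_half_simplex:
  assumes "i \<le> n" "j \<le> n" "i \<noteq> j"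
  shows "shear_map i j ` half_simplex i j = \<Delta>"
proof (intro equalityI subsetI)
  show "q \<in> \<Delta>" if "q \<in> shear_map i j ` half_simplex i j" for q
    using that assms by (auto simp: half_simplex_def simplex_eq lam_shear_map)
next
  fix q assume q: "q \<in> \<Delta>"
  define p where "p = q + (- (lam j q / 2)) *\<^sub>R (x j - x i)"
  have lam_p: "lam k p
      = (if k = i then lam i q + lam j q / 2 else if k = j then lam j q / 2 else lam k q)"
    if "k \<le> n" for k
    using assms that unfolding p_def lam_add_scaled by (simp add: lam_vertex)
  have "p \<in> half_simplex i j"
    using q assms lam_p by (auto simp: half_simplex_def simplex_eq)
  moreover have "shear_map i j p = q"
    by (rule lam_inject) (use assms lam_p in \<open>simp add: lam_shear_map\<close>)
  ultimately show "q \<in> shear_map i j ` half_simplex i j"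
    by blast
qed

lemma compact_half_simplex: "compact (half_simplex i j)"
proof -
  have "half_simplex i j = \<Delta> \<inter> {p. lam j p \<le> lam i p}"
    by (auto simp: half_simplex_def)
  moreover have "closed {p. lam j p \<le> lam i p}"
    by (intro closed_Collect_le continuous_on_lam)
  ultimately show ?thesis
    using compact_simplex by (simp add: compact_Int_closed)
qed

lemma negligible_lam_eq:
  assumes "i \<le> n" "j \<le> n" "i \<noteq> j"
  shows "negligible {p. lam i p = lam j p}"
proof -
  define l where "l = (\<lambda>p. (lam i p - lam i 0) - (lam j p - lam j 0))"
  have "linear l"
    unfolding l_def by (intro linear_compose_sub linear_lam)
  moreover have "l (x i) \<noteq> l (x j)"
    using assms by (simp add: l_def lam_vertex)
  ultimately have "negligible {p. l p = lam j 0 - lam i 0}"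
    by (rule negligible_level_set_linear)
  moreover have "{p. l p = lam j 0 - lam i 0} = {p. lam i p = lam j p}"
    by (auto simp: l_def)
  ultimately show ?thesis
    by simp
qed

text \<open>
  The affine maps below preserve, resp.\ double, volume; their determinants are read off from
  their action on \<open>\<Delta>\<close>, which has positive volume.
\<close>

lemma integral_swap_map:
  fixes h :: "(real, 'm) vec \<Rightarrow> real"
  assumes "i \<le> n" "j \<le> n" "i \<noteq> j" "compact S" "continuous_on UNIV h"
  shows "integral (swap_map i j ` S) h = integral S (\<lambda>p. h (swap_map i j p))"
proof -
  define d where "d = \<bar>det (matrix (\<lambda>p. swap_map i j p - swap_map i j 0))\<bar>"
  have inj: "inj_on (swap_map i j) T" for T
    by (metis assms(1-3) inj_on_inverseI swap_map_swap_map)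
  have cov: "integral (swap_map i j ` T) g = d * integral T (\<lambda>p. g (swap_map i j p))"
    if "compact T" "continuous_on UNIV g" for T and g :: "(real, 'm) vec \<Rightarrow> real"
    unfolding d_def using linear_swap_map that(1) inj continuous_on_subset[OF that(2)]
    by (rule integral_affine_image) simp
  have "vol = d * vol"
    using cov[OF compact_simplex, of "\<lambda>_. 1"] by (simp add: swap_map_simplex assms vol_eq_integral)
  then have "d = 1"
    using vol_pos by simp
  then show ?thesis
    using cov[OF assms(4,5)] by simp
qed

lemma integral_simplex_halves:
  fixes h :: "(real, 'm) vec \<Rightarrow> real"
  assumes "i \<le> n" "j \<le> n" "i \<noteq> j" "continuous_on UNIV h"
  shows "integral \<Delta> h
    = integral (half_simplex i j) h + integral (half_simplex i j) (\<lambda>p. h (swap_map i j p))"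
proof -
  have int: "h integrable_on half_simplex k l" for k l
    using compact_half_simplex continuous_on_subset[OF assms(4) subset_UNIV]
    by (rule integrable_on_compact_continuous)
  have "negligible (half_simplex i j \<inter> half_simplex j i)"
    by (rule negligible_subset[OF negligible_lam_eq[OF assms(1-3)]]) (auto simp: half_simplex_def)
  moreover have "\<Delta> = half_simplex i j \<union> half_simplex j i"
    by (auto simp: half_simplex_def)
  ultimately have "integral \<Delta> h = integral (half_simplex i j) h + integral (half_simplex j i) h"
    using integral_Un_negligible[OF int int] by simp
  also have "integral (half_simplex j i) h = integral (half_simplex i j) (\<lambda>p. h (swap_map i j p))"
    using integral_swap_map[OF assms(1-3) compact_half_simplex[of i j] assms(4)]
    unfolding swap_map_half_simplex[OF assms(1-3)] .
  finally show ?thesis .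
qed

lemma integral_shear_map:
  fixes h :: "(real, 'm) vec \<Rightarrow> real"
  assumes "i \<le> n" "j \<le> n" "i \<noteq> j" "continuous_on UNIV h"
  shows "integral \<Delta> h = 2 * integral (half_simplex i j) (\<lambda>p. h (shear_map i j p))"
proof -
  define d where "d = \<bar>det (matrix (\<lambda>p. shear_map i j p - shear_map i j 0))\<bar>"
  have cov: "integral \<Delta> g = d * integral (half_simplex i j) (\<lambda>p. g (shear_map i j p))"
    if "continuous_on UNIV g" for g :: "(real, 'm) vec \<Rightarrow> real"
    using integral_affine_image[OF linear_shear_map compact_half_simplex[of i j]
        inj_on_subset[OF inj_shear_map[OF assms(1-3)] subset_UNIV] continuous_on_subset[OF that]]
    unfolding d_def shear_map_half_simplex[OF assms(1-3)] by simp
  define A where "A = integral (half_simplex i j) (\<lambda>_. 1::real)"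
  have "vol = 2 * A"
    using integral_simplex_halves[OF assms(1-3), of "\<lambda>_. 1"] by (simp add: vol_eq_integral A_def)
  moreover have "vol = d * A"
    using cov[of "\<lambda>_. 1"] by (simp add: vol_eq_integral A_def)
  ultimately have "d = 2"
    using vol_pos by auto
  then show ?thesis
    using cov[OF assms(4)] by simp
qed

lemma integral_lam:
  assumes "k \<le> n"
  shows "integral \<Delta> (lam k) = vol / (n + 1)"
proof -
  have same: "integral \<Delta> (lam i) = integral \<Delta> (lam 0)" if "i \<le> n" for i
  proof (cases "i = 0")
    case False
    have "integral \<Delta> (lam i) = integral (swap_map i 0 ` \<Delta>) (lam i)"
      by (simp only: swap_map_simplex[OF that le0 False])
    also have "\<dots> = integral \<Delta> (\<lambda>p. lam i (swap_map i 0 p))"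
      by (rule integral_swap_map[OF that le0 False compact_simplex continuous_on_lam])
    also have "\<dots> = integral \<Delta> (lam 0)"
      using that False by (simp add: lam_swap_map)
    finally show ?thesis .
  qed simp
  have "vol = integral \<Delta> (\<lambda>p. \<Sum>k\<in>{0..n}. lam k p)"
    by (simp add: sum_lam vol_eq_integral)
  also have "\<dots> = (\<Sum>k\<in>{0..n}. integral \<Delta> (lam k))"
    by (rule integral_sum) (auto intro: integrable_on_simplex continuous_on_lam)
  also have "\<dots> = (\<Sum>k\<in>{0..n}. integral \<Delta> (lam 0))"
    by (intro sum.cong refl same) simp
  also have "\<dots> = (n + 1) * integral \<Delta> (lam 0)"
    by simp
  finally show ?thesis
    using same[OF assms] by (simp add: field_simps)
qed

lemma integral_min_lam:
  assumes "i \<le> n" "j \<le> n" "i \<noteq> j"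
  shows "integral \<Delta> (\<lambda>p. min (lam i p) (lam j p)) = vol / (2 * (n + 1))"
proof -
  have "vol / (n + 1) = 2 * integral (half_simplex i j) (\<lambda>p. 2 * lam j p)"
    using integral_shear_map[OF assms continuous_on_lam, of j] integral_lam[OF assms(2)] assms
    by (simp add: lam_shear_map)
  also have "\<dots> = 2 * (2 * integral (half_simplex i j) (lam j))"
    by simp
  finally have half: "2 * integral (half_simplex i j) (lam j) = vol / (2 * (n + 1))"
    by (simp add: field_simps)
  have "integral \<Delta> (\<lambda>p. min (lam i p) (lam j p))
      = integral (half_simplex i j) (\<lambda>p. min (lam i p) (lam j p))
        + integral (half_simplex i j) (\<lambda>p. min (lam i (swap_map i j p)) (lam j (swap_map i j p)))"
    using assms by (intro integral_simplex_halves continuous_intros)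
  also have "integral (half_simplex i j) (\<lambda>p. min (lam i p) (lam j p))
      = integral (half_simplex i j) (lam j)"
    by (rule integral_cong) (auto simp: half_simplex_def)
  also have "integral (half_simplex i j)
      (\<lambda>p. min (lam i (swap_map i j p)) (lam j (swap_map i j p)))
      = integral (half_simplex i j) (lam j)"
    by (rule integral_cong) (use assms in \<open>auto simp: half_simplex_def lam_swap_map\<close>)
  finally show ?thesis
    using half by simp
qed

subsection \<open>Convex functions on the simplex\<close>

lemma convex_on_simplex_le_vertices:
  assumes "convex_on \<Delta> f" "p \<in> \<Delta>"
  shows "f p \<le> (\<Sum>k\<in>{0..n}. lam k p * f (x k))"
proof -
  have "f (\<Sum>k\<in>{0..n}. lam k p *\<^sub>R x k) \<le> (\<Sum>k\<in>{0..n}. lam k p * f (x k))"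
    by (rule convex_on_sum[OF _ _ assms(1)])
      (use assms(2) in \<open>auto simp: lam_nonneg vertex_in_simplex sum_lam\<close>)
  then show ?thesis
    by (simp add: sum_lam_vertices)
qed

lemma convex_on_simplex_bounded_above:
  assumes "convex_on \<Delta> f"
  obtains M where "\<And>p. p \<in> \<Delta> \<Longrightarrow> f p \<le> M"
proof -
  define M where "M = Max ((\<lambda>k. f (x k)) ` {0..n})"
  have "f p \<le> M" if p: "p \<in> \<Delta>" for p
  proof -
    have "f p \<le> (\<Sum>k\<in>{0..n}. lam k p * f (x k))"
      by (rule convex_on_simplex_le_vertices[OF assms p])
    also have "\<dots> \<le> (\<Sum>k\<in>{0..n}. lam k p * M)"
      by (rule sum_mono, rule mult_left_mono) (use p in \<open>auto simp: M_def lam_nonneg\<close>)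
    also have "\<dots> = M"
      by (simp add: sum_lam flip: sum_distrib_right)
    finally show ?thesis .
  qed
  then show ?thesis
    by (rule that)
qed

lemma segment_endpoint_in_simplex:
  assumes "0 < s" "\<And>k. k \<le> n \<Longrightarrow> (1 - s) * lam k p \<le> lam k q"
  obtains r where "r \<in> \<Delta>" "q = (1 - s) *\<^sub>R p + s *\<^sub>R r"
proof
  define r where "r = p + (1 / s) *\<^sub>R (q - p)"
  have "lam k r = (lam k q - (1 - s) * lam k p) / s" for k
    using assms(1) unfolding r_def lam_add_scaled by (simp add: field_simps)
  then show "r \<in> \<Delta>"
    using assms by (simp add: simplex_eq)
  show "q = (1 - s) *\<^sub>R p + s *\<^sub>R r"
    using assms(1) by (simp add: r_def algebra_simps)
qed

lemma convex_on_simplex_bounded: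
  assumes "convex_on \<Delta> f"
  obtains B where "\<And>p. p \<in> \<Delta> \<Longrightarrow> \<bar>f p\<bar> \<le> B"
proof -
  obtain M where M: "\<And>p. p \<in> \<Delta> \<Longrightarrow> f p \<le> M"
    using convex_on_simplex_bounded_above[OF assms] by blast
  define N where "N = real (n + 1)"
  have N: "1 < N"
    using n_eq by (simp add: N_def)
  define c where "c = (\<Sum>k\<in>{0..n}. (1 / N) *\<^sub>R x k)"
  have lam_c: "lam k c = 1 / N" if "k \<le> n" for k
    unfolding c_def using that by (intro lam_sum_vertices) (simp_all add: N_def)
  \<comment> \<open>Every point is pushed through the centroid \<open>c\<close> to the far side of \<open>\<Delta>\<close>.\<close>
  have "N * f c - (N - 1) * M \<le> f p" if p: "p \<in> \<Delta>" for p
  proof -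
    obtain r where r: "r \<in> \<Delta>" "c = (1 - (1 - 1 / N)) *\<^sub>R p + (1 - 1 / N) *\<^sub>R r"
    proof (rule segment_endpoint_in_simplex)
      show "0 < 1 - 1 / N"
        using N by simp
      show "(1 - (1 - 1 / N)) * lam k p \<le> lam k c" if "k \<le> n" for k
        using lam_le_1[OF p that] N by (simp add: lam_c that divide_right_mono)
    qed
    have "f c \<le> (1 - (1 - 1 / N)) * f p + (1 - 1 / N) * f r"
      unfolding r(2) using N p r(1) by (intro convex_onD[OF assms]) auto
    also have "\<dots> \<le> (1 / N) * f p + (1 - 1 / N) * M"
      using M[OF r(1)] N by (simp add: mult_left_mono)
    finally show ?thesis
      using N by (simp add: field_simps)
  qed
  then show ?thesis
    using M by (intro that[of "\<bar>M\<bar> + \<bar>N * f c - (N - 1) * M\<bar>"]) (smt (verit))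
qed

lemma openin_convex_on_simplex_sublevel:
  assumes "convex_on \<Delta> f"
  shows "openin (top_of_set \<Delta>) {p \<in> \<Delta>. f p < a}"
proof (subst openin_subopen, intro ballI)
  fix p assume "p \<in> {p \<in> \<Delta>. f p < a}"
  then have p: "p \<in> \<Delta>" "f p < a"
    by auto
  obtain M where M: "\<And>p. p \<in> \<Delta> \<Longrightarrow> f p \<le> M"
    using convex_on_simplex_bounded_above[OF assms] by blast
  define \<eta> where "\<eta> = min 1 ((a - f p) / (M - f p + 1))"
  have gap: "0 < a - f p" "0 \<le> M - f p" "0 < M - f p + 1"
    using M[OF p(1)] p(2) by auto
  have "\<eta> * (M - f p) \<le> (a - f p) / (M - f p + 1) * (M - f p)"
    using gap by (intro mult_right_mono) (auto simp: \<eta>_def)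
  also have "\<dots> < a - f p"
    using gap by (simp add: field_simps)
  finally have \<eta>: "0 < \<eta>" "\<eta> \<le> 1" "\<eta> * (M - f p) < a - f p"
    using gap by (auto simp: \<eta>_def)
  \<comment> \<open>Near \<open>p\<close>, every point of \<open>\<Delta>\<close> lies on a segment from \<open>p\<close> to \<open>\<Delta>\<close> at parameter \<open>\<eta>\<close>.\<close>
  define K where "K = {k. k \<le> n \<and> 0 < lam k p}"
  define U where "U = (\<Inter>k\<in>K. {q. (1 - \<eta>) * lam k p < lam k q})"
  have "open U"
    unfolding U_def K_def by (intro open_INT ballI open_Collect_less continuous_intros) auto
  moreover have "p \<in> U"
    using \<eta> by (auto simp: U_def K_def)
  moreover have "f q < a" if q: "q \<in> \<Delta>" "q \<in> U" for q
  proof -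
    have "(1 - \<eta>) * lam k p \<le> lam k q" if "k \<le> n" for k
    proof (cases "k \<in> K")
      case True
      then show ?thesis
        using q(2) by (auto simp: U_def)
    next
      case False
      then have "lam k p = 0"
        using lam_nonneg[OF p(1) that] that by (auto simp: K_def)
      then show ?thesis
        using lam_nonneg[OF q(1) that] by simp
    qed
    then obtain r where r: "r \<in> \<Delta>" "q = (1 - \<eta>) *\<^sub>R p + \<eta> *\<^sub>R r"
      using segment_endpoint_in_simplex[OF \<eta>(1)] by blast
    have "f q \<le> (1 - \<eta>) * f p + \<eta> * f r"
      unfolding r(2) using \<eta> p(1) r(1) by (intro convex_onD[OF assms]) auto
    also have "\<dots> \<le> (1 - \<eta>) * f p + \<eta> * M"
      using M[OF r(1)] \<eta>(1) by simp
    finally show ?thesis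
      using \<eta>(3) by (simp add: algebra_simps)
  qed
  ultimately show "\<exists>T. openin (top_of_set \<Delta>) T \<and> p \<in> T \<and> T \<subseteq> {p \<in> \<Delta>. f p < a}"
    using p(1) by (intro exI[of _ "\<Delta> \<inter> U"]) (auto intro: openin_open_Int)
qed

lemma borel_measurable_convex_on_simplex:
  assumes "convex_on \<Delta> f"
  shows "(\<lambda>p. indicator \<Delta> p *\<^sub>R f p) \<in> borel_measurable lborel"
  unfolding borel_measurable_iff_less
proof
  fix a :: real
  obtain U where U: "open U" "{p \<in> \<Delta>. f p < a} = \<Delta> \<inter> U"
    using openin_convex_on_simplex_sublevel[OF assms, of a] by (auto simp: openin_open)
  have "{p \<in> space lborel. indicator \<Delta> p *\<^sub>R f p < a} = (if 0 < a then - \<Delta> else {}) \<union> (\<Delta> \<inter> U)"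
    using U(2) by (auto simp: indicator_def split: if_splits)
  also have "\<dots> \<in> sets lborel"
    using closed_simplex U(1) by (auto intro!: borel_closed borel_open sets.Un sets.Int)
  finally show "{p \<in> space lborel. indicator \<Delta> p *\<^sub>R f p < a} \<in> sets lborel" .
qed

lemma set_integrable_convex_on_simplex:
  assumes "convex_on \<Delta> f"
  shows "set_integrable lborel \<Delta> f"
proof -
  obtain B where B: "\<And>p. p \<in> \<Delta> \<Longrightarrow> \<bar>f p\<bar> \<le> B"
    using convex_on_simplex_bounded[OF assms] by blast
  show ?thesis
    unfolding set_integrable_def
  proof (rule integrableI_bounded_set[where A = \<Delta> and B = B])
    show "\<Delta> \<in> sets lborel"
      using closed_simplex by simp
    show "emeasure lborel \<Delta> < \<infinity>"
      using compact_simplex by (rule emeasure_compact_finite)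
    show "(\<lambda>p. indicator \<Delta> p *\<^sub>R f p) \<in> borel_measurable lborel"
      by (rule borel_measurable_convex_on_simplex[OF assms])
  qed (use B in auto)
qed

lemma Avg_convex_on_simplex:
  assumes "convex_on \<Delta> f"
  shows "Avg f \<Delta> = integral \<Delta> f / vol"
  unfolding Avg_def vol_def
  using set_borel_integral_eq_integral(2)[OF set_integrable_convex_on_simplex[OF assms]] by simp

subsection \<open>Decomposition into vertices and edge midpoints\<close>

definition pair_weight :: "real \<Rightarrow> (real, 'm) vec \<Rightarrow> nat \<Rightarrow> nat \<Rightarrow> real" where
  "pair_weight c p i j =
    (if i = j then lam i p - c * (\<Sum>k\<in>{0..n} - {i}. min (lam i p) (lam k p))
     else c * min (lam i p) (lam j p))"

lemma pair_weight_commute: "pair_weight c p i j = pair_weight c p j i"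
  by (simp add: pair_weight_def min.commute)

lemma sum_pair_weight:
  assumes "i \<le> n"
  shows "(\<Sum>j\<in>{0..n}. pair_weight c p i j) = lam i p"
proof -
  have "(\<Sum>j\<in>{0..n}. pair_weight c p i j)
      = pair_weight c p i i + (\<Sum>j\<in>{0..n} - {i}. pair_weight c p i j)"
    using assms by (intro sum.remove) auto
  also have "(\<Sum>j\<in>{0..n} - {i}. pair_weight c p i j) = (\<Sum>j\<in>{0..n} - {i}. c * min (lam i p) (lam j p))"
    by (rule sum.cong) (auto simp: pair_weight_def)
  finally show ?thesis
    by (simp add: pair_weight_def sum_distrib_left)
qed

lemma pair_weight_nonneg:
  assumes "p \<in> \<Delta>" "i \<le> n" "j \<le> n" "0 \<le> c" "c * real n \<le> 1"
  shows "0 \<le> pair_weight c p i j"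
proof (cases "i = j")
  case True
  have "(\<Sum>k\<in>{0..n} - {i}. min (lam i p) (lam k p)) \<le> (\<Sum>k\<in>{0..n} - {i}. lam i p)"
    by (rule sum_mono) simp
  also have "\<dots> = n * lam i p"
    using assms(2) by simp
  finally have "c * (\<Sum>k\<in>{0..n} - {i}. min (lam i p) (lam k p)) \<le> (c * n) * lam i p"
    using assms(4) by (simp add: mult_left_mono mult.assoc)
  also have "\<dots> \<le> lam i p"
    using mult_right_mono[OF assms(5) lam_nonneg[OF assms(1,2)]] by simp
  finally show ?thesis
    using True by (simp add: pair_weight_def)
next
  case False
  then show ?thesis
    using assms lam_nonneg[OF assms(1)] by (simp add: pair_weight_def)
qed

lemma sum_pair_weight_midpoints:
  "(\<Sum>i\<in>{0..n}. \<Sum>j\<in>{0..n}. pair_weight c p i j *\<^sub>R ((x i + x j) /\<^sub>R 2)) = p"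
proof -
  have "(\<Sum>i\<in>{0..n}. \<Sum>j\<in>{0..n}. pair_weight c p i j *\<^sub>R ((x i + x j) /\<^sub>R 2))
      = (\<Sum>i\<in>{0..n}. (\<Sum>j\<in>{0..n}. pair_weight c p i j) *\<^sub>R x i)"
    by (rule sum_symmetric_midpoints) (rule pair_weight_commute)
  also have "\<dots> = (\<Sum>i\<in>{0..n}. lam i p *\<^sub>R x i)"
    by (intro sum.cong refl) (simp add: sum_pair_weight)
  finally show ?thesis
    by (simp add: sum_lam_vertices)
qed

lemma convex_on_simplex_le_pair_weight:
  assumes "convex_on \<Delta> f" "p \<in> \<Delta>" "0 \<le> c" "c * real n \<le> 1"
  shows "f p \<le> (\<Sum>i\<in>{0..n}. \<Sum>j\<in>{0..n}. pair_weight c p i j * f ((x i + x j) /\<^sub>R 2))"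
proof -
  let ?S = "{0..n} \<times> {0..n}"
  let ?w = "\<lambda>ij. pair_weight c p (fst ij) (snd ij)"
  let ?y = "\<lambda>ij. (x (fst ij) + x (snd ij)) /\<^sub>R 2"
  have "f (\<Sum>ij\<in>?S. ?w ij *\<^sub>R ?y ij) \<le> (\<Sum>ij\<in>?S. ?w ij * f (?y ij))"
  proof (rule convex_on_sum[OF _ _ assms(1)])
    show "sum ?w ?S = 1"
      by (simp add: sum.cartesian_product' sum_pair_weight sum_lam)
  qed (use assms midpoint_in_simplex in \<open>auto simp: pair_weight_nonneg\<close>)
  then show ?thesis
    using sum_pair_weight_midpoints[of c p] by (simp add: sum.cartesian_product')
qed

lemma continuous_on_pair_weight [continuous_intros]: "continuous_on A (\<lambda>p. pair_weight c p i j)"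
  unfolding pair_weight_def by (cases "i = j") (auto intro!: continuous_intros)

lemma integral_pair_weight:
  assumes "i \<le> n" "j \<le> n"
  shows "integral \<Delta> (\<lambda>p. pair_weight c p i j)
    = (if i = j then 1 - c * real n / 2 else c / 2) * (vol / (n + 1))"
proof (cases "i = j")
  case True
  have "integral \<Delta> (\<lambda>p. pair_weight c p i j)
      = integral \<Delta> (lam i) - c * (\<Sum>k\<in>{0..n} - {i}. integral \<Delta> (\<lambda>p. min (lam i p) (lam k p)))"
    using True
    by (simp add: pair_weight_def integral_diff integral_sum integrable_on_simplex
        continuous_on_lam integral_mult_right continuous_intros)
  also have "(\<Sum>k\<in>{0..n} - {i}. integral \<Delta> (\<lambda>p. min (lam i p) (lam k p)))
      = (\<Sum>k\<in>{0..n} - {i}. vol / (n + 1) / 2)"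
    using assms by (intro sum.cong refl) (auto simp: integral_min_lam)
  finally show ?thesis
    using True assms by (simp add: integral_lam algebra_simps)
next
  case False
  then show ?thesis
    using integral_min_lam[OF assms False] by (simp add: pair_weight_def)
qed

theorem Avg_le_vertices_midpoints:
  fixes c :: real
  assumes cvx: "convex_on \<Delta> f" and c: "0 \<le> c" "c * real n \<le> 1"
  shows "Avg f \<Delta> \<le> (1 - c * real n / 2) / (n + 1) * (\<Sum>i\<in>{0..n}. f (x i))
    + c / (n + 1) * (\<Sum>j\<in>{0..n}. \<Sum>i\<in>{0..<j}. f ((x i + x j) /\<^sub>R 2))"
proof -
  define m where "m i j = f ((x i + x j) /\<^sub>R 2)" for i j
  define G where "G i j = integral \<Delta> (\<lambda>p. pair_weight c p i j) * m i j" for i j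
  define v where "v = vol / (n + 1)"
  have w: "integral \<Delta> (\<lambda>p. pair_weight c p i j) = (if i = j then 1 - c * real n / 2 else c / 2) * v"
    if "i \<le> n" "j \<le> n" for i j
    using integral_pair_weight[OF that] by (simp add: v_def)
  have int: "(\<lambda>p. pair_weight c p i j * m i j) integrable_on \<Delta>" for i j
    by (intro integrable_on_simplex continuous_intros)
  have "integral \<Delta> f \<le> integral \<Delta> (\<lambda>p. \<Sum>i\<in>{0..n}. \<Sum>j\<in>{0..n}. pair_weight c p i j * m i j)"
  proof (rule integral_le)
    show "f integrable_on \<Delta>"
      using set_integrable_convex_on_simplex[OF cvx] by (rule set_borel_integral_eq_integral(1))
  qed (use convex_on_simplex_le_pair_weight[OF cvx _ c] in \<open>auto intro!: integrable_on_simplex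
      continuous_intros simp: m_def\<close>)
  also have "\<dots> = (\<Sum>i\<in>{0..n}. \<Sum>j\<in>{0..n}. G i j)"
    by (simp add: integral_sum int integrable_sum G_def)
  also have "\<dots> = (\<Sum>i\<in>{0..n}. G i i) + 2 * (\<Sum>j\<in>{0..n}. \<Sum>i\<in>{0..<j}. G i j)"
    by (rule sum_square_symmetric) (simp add: G_def m_def pair_weight_commute add.commute)
  also have "(\<Sum>i\<in>{0..n}. G i i) = (1 - c * real n / 2) * v * (\<Sum>i\<in>{0..n}. f (x i))"
  proof -
    have "m i i = f (x i)" for i
      unfolding m_def scaleR_2[symmetric] by simp
    then show ?thesis
      by (simp add: G_def w sum_distrib_left)
  qed
  also have "2 * (\<Sum>j\<in>{0..n}. \<Sum>i\<in>{0..<j}. G i j)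
      = c * v * (\<Sum>j\<in>{0..n}. \<Sum>i\<in>{0..<j}. m i j)"
    unfolding sum_distrib_left by (intro sum.cong refl) (auto simp: G_def w)
  finally have "integral \<Delta> f \<le> v * ((1 - c * real n / 2) * (\<Sum>i\<in>{0..n}. f (x i))
      + c * (\<Sum>j\<in>{0..n}. \<Sum>i\<in>{0..<j}. m i j))"
    by (simp add: algebra_simps)
  then have "integral \<Delta> f / vol \<le> v * ((1 - c * real n / 2) * (\<Sum>i\<in>{0..n}. f (x i))
      + c * (\<Sum>j\<in>{0..n}. \<Sum>i\<in>{0..<j}. m i j)) / vol"
    using vol_pos by (simp add: divide_right_mono)
  also have "\<dots> = ((1 - c * real n / 2) * (\<Sum>i\<in>{0..n}. f (x i))
      + c * (\<Sum>j\<in>{0..n}. \<Sum>i\<in>{0..<j}. m i j)) / (n + 1)"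
    using vol_pos by (simp add: v_def)
  finally show ?thesis
    by (simp add: Avg_convex_on_simplex[OF cvx] m_def add_divide_distrib)
qed

end

lemma barycentric_coordinates_exist:
  fixes x :: "nat \<Rightarrow> (real, 'm::{finite,wellorder}) vec"
  assumes n: "n = CARD('m)" and inj: "inj_on x {0..n}" and aff: "\<not> affine_dependent (x ` {0..n})"
  obtains lam where "barycentric n x lam"
proof -
  define B where "B = (\<lambda>k. x k - x 0) ` {1..n}"
  have inj_B: "inj_on (\<lambda>k. x k - x 0) {1..n}"
    using inj by (auto simp: inj_on_def)
  have split: "{0..n} = insert 0 {1..n}"
    by auto
  have "x 0 \<notin> x ` {1..n}"
    using inj_onD[OF inj, of 0] by force
  then have "\<not> dependent ((\<lambda>y. - x 0 + y) ` x ` {1..n})"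
    using aff unfolding split image_insert by (simp add: affine_dependent_iff_dependent)
  moreover have "(\<lambda>y. - x 0 + y) ` x ` {1..n} = B"
    by (auto simp: B_def image_image)
  ultimately have indep: "independent B"
    by simp
  have "dim B = DIM((real, 'm) vec)"
    using dim_eq_card_independent[OF indep] card_image[OF inj_B] n by (simp add: B_def)
  then have span: "span B = UNIV"
    using dim_eq_full by blast
  define R where "R k v = representation B v (x k - x 0)" for k v
  have linear_R: "linear (R k)" for k
    unfolding R_def by (rule bounded_linear.linear[OF bounded_linear_representation[OF indep span]])
  have R_vertex: "R i (x j - x 0) = (if i = j then 1 else 0)"
    if "1 \<le> i" "i \<le> n" "j \<le> n" for i j
  proof (cases "j = 0")
    case True
    then show ?thesis
      using that by (simp add: R_def representation_zero)
  next
    case False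
    then have "x j - x 0 \<in> B"
      using that by (auto simp: B_def)
    moreover have "x i - x 0 = x j - x 0 \<longleftrightarrow> i = j"
      using inj_onD[OF inj, of i j] that by auto
    ultimately show ?thesis
      by (simp add: R_def representation_basis[OF indep])
  qed
  have sum_R: "(\<Sum>k\<in>{1..n}. R k v *\<^sub>R (x k - x 0)) = v" for v
  proof -
    have "(\<Sum>k\<in>{1..n}. R k v *\<^sub>R (x k - x 0)) = (\<Sum>b\<in>B. representation B v b *\<^sub>R b)"
      unfolding R_def B_def sum.reindex[OF inj_B] by simp
    also have "\<dots> = v"
      using indep span by (intro sum_representation_eq) (auto simp: B_def)
    finally show ?thesis .
  qed
  define lam where
    "lam k p = (if k = 0 then 1 - (\<Sum>j\<in>{1..n}. R j (p - x 0)) else R k (p - x 0))" for k p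
  have lam_0: "lam k p - lam k 0 = (if k = 0 then - (\<Sum>j\<in>{1..n}. R j p) else R k p)" for k p
    by (simp add: lam_def linear_diff[OF linear_R] linear_neg[OF linear_R] sum_subtractf sum_negf)
  show ?thesis
  proof (rule that[of lam], rule barycentric.intro)
    fix k
    have "linear (\<lambda>p. - (\<Sum>j\<in>{1..n}. R j p))"
      by (intro linear_compose_neg linear_compose_sum) (simp add: linear_R)
    then show "linear (\<lambda>p. lam k p - lam k 0)"
      unfolding lam_0 by (cases "k = 0") (simp_all add: linear_R)
    show "lam k (x j) = (if k = j then 1 else 0)" if "k \<le> n" "j \<le> n" for k j
    proof (cases "k = 0")
      case True
      have "(\<Sum>i\<in>{1..n}. R i (x j - x 0)) = (\<Sum>i\<in>{1..n}. if i = j then 1 else 0)"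
        using that by (intro sum.cong) (auto simp: R_vertex)
      then show ?thesis
        using True that by (simp add: lam_def)
    qed (use that R_vertex in \<open>simp add: lam_def\<close>)
    show "(\<Sum>k\<in>{0..n}. lam k p) = 1" for p
      unfolding split by (simp add: lam_def)
    show "(\<Sum>k\<in>{0..n}. lam k p *\<^sub>R x k) = p" for p
    proof -
      have "(\<Sum>k\<in>{0..n}. lam k p *\<^sub>R x k)
          = x 0 + (\<Sum>k\<in>{1..n}. R k (p - x 0) *\<^sub>R (x k - x 0))"
        unfolding split
        by (simp add: lam_def scaleR_diff_left scaleR_diff_right sum_subtractf scaleR_sum_left)
      then show ?thesis
        using sum_R[of "p - x 0"] by simp
    qed
  qed (use n aff in auto)
qed

lemma ceiling_half: "real_of_int \<lceil>real m / 2\<rceil> = real m - real (m div 2)"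
proof -
  define q where "q = m div 2"
  have "m = 2 * q \<or> m = 2 * q + 1"
    unfolding q_def by presburger
  then show ?thesis
  proof
    assume m: "m = 2 * q + 1"
    have "\<lceil>real m / 2\<rceil> = int q + 1"
      unfolding m by (intro ceiling_unique) auto
    then show ?thesis
      using m by simp
  qed simp
qed

lemma real_choose_two: "real (m choose 2) = real m * (real m - 1) / 2"
proof (induction m)
  case (Suc m)
  have "Suc m choose 2 = m + (m choose 2)"
    by (simp add: numeral_2_eq_2)
  then show ?case
    using Suc by (simp add: field_simps)
qed simp

lemma floor_half_parameter:
  fixes n :: nat
  assumes "1 \<le> n"
  defines "c \<equiv> 2 * real ((n + 1) div 2) / (real (n + 1) * real n)"
  shows "0 \<le> c" "c * real n \<le> 1"
    and "(1 - c * real n / 2) / real (n + 1) * s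
      = real_of_int \<lceil>real (n + 1) / 2\<rceil> / real (n + 1) * (s / real (n + 1))"
    and "c / real (n + 1) * t
      = real ((n + 1) div 2) / real (n + 1) * (1 / real ((n + 1) choose 2) * t)"
proof -
  define N where "N = real (n + 1)"
  define F where "F = real ((n + 1) div 2)"
  have N: "0 < N" "real n = N - 1" "1 < N"
    using assms(1) by (simp_all add: N_def)
  have c: "c = 2 * F / (N * (N - 1))"
    by (simp add: c_def N_def F_def)
  have "2 * ((n + 1) div 2) \<le> n + 1"
    by simp
  then have "2 * F \<le> N"
    unfolding N_def F_def by linarith
  moreover have "c * real n = 2 * F / N"
    using N by (simp add: c)
  ultimately show "c * real n \<le> 1"
    using N by simp
  show "0 \<le> c"
    using N by (simp add: c F_def)
  have ceil: "real_of_int \<lceil>N / 2\<rceil> = N - F"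
    unfolding N_def F_def by (rule ceiling_half)
  show "(1 - c * real n / 2) / real (n + 1) * s
      = real_of_int \<lceil>real (n + 1) / 2\<rceil> / real (n + 1) * (s / real (n + 1))"
    unfolding N_def[symmetric] ceil N(2) using N by (simp add: c field_simps)
  have choose: "real ((n + 1) choose 2) = N * (N - 1) / 2"
    unfolding N_def real_choose_two by simp
  show "c / real (n + 1) * t
      = real ((n + 1) div 2) / real (n + 1) * (1 / real ((n + 1) choose 2) * t)"
    unfolding choose N_def[symmetric] F_def[symmetric] using N by (simp add: c field_simps)
qed

theorem Avg_le_vertices_midpoints_wellorder:
  fixes x :: "nat \<Rightarrow> (real, 'n::{finite,wellorder}) vec"
    and f :: "(real, 'n) vec \<Rightarrow> real"
  defines "n \<equiv> CARD('n)"
  defines "\<Delta> \<equiv> convex hull (x ` {0..n})"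
  assumes inj: "inj_on x {0..n}"
    and aff: "\<not> affine_dependent (x ` {0..n})"
    and cvx: "convex_on \<Delta> f"
  shows "Avg f \<Delta> \<le>
      (real ((n + 1) div 2) / real (n + 1)) *
        ((1 / real ((n + 1) choose 2)) *
          (\<Sum>j\<in>{0..n}. \<Sum>i\<in>{0..<j}. f ((x i + x j) /\<^sub>R 2)))
    + (real_of_int \<lceil>real (n + 1) / 2\<rceil> / real (n + 1)) *
        ((\<Sum>i\<in>{0..n}. f (x i)) / real (n + 1))"
proof -
  obtain lam where "barycentric n x lam"
    using barycentric_coordinates_exist[OF meta_eq_to_obj_eq[OF n_def] inj aff] by blast
  then interpret B: barycentric n x lam .
  have "1 \<le> n"
    by (simp add: n_def)
  note c = floor_half_parameter[OF this]
  have "B.\<Delta> = \<Delta>"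
    by (simp add: B.\<Delta>_def \<Delta>_def)
  then have cvx': "convex_on B.\<Delta> f"
    using cvx by simp
  show ?thesis
    using B.Avg_le_vertices_midpoints[OF cvx' c(1,2)] unfolding c(3,4) \<open>B.\<Delta> = \<Delta>\<close>
    by (simp only: add.commute)
qed

section \<open>Transfer to an arbitrary finite index type\<close>

text \<open>
  The change of variables theorem of the library is stated for index types that are
  well-ordered; \<open>'a wo\<close> is a copy of the finite type \<open>'a\<close> carrying such an order, to which the
  statement for an arbitrary finite index type is transferred.
\<close>

typedef 'a wo = "UNIV :: 'a set"
  morphisms Rep_wo Abs_wo
  by simp

instance wo :: (finite) finite
proof
  have "(UNIV :: 'a wo set) = Abs_wo ` UNIV"
    by (metis Abs_wo_cases UNIV_I image_iff subsetI subset_antisym)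
  then show "finite (UNIV :: 'a wo set)"
    by (metis finite finite_imageI)
qed

instantiation wo :: (finite) linorder
begin

definition less_eq_wo_def: "a \<le> b \<longleftrightarrow> to_nat (Rep_wo a) \<le> to_nat (Rep_wo b)"

definition less_wo_def: "a < b \<longleftrightarrow> to_nat (Rep_wo a) < to_nat (Rep_wo b)"

instance
  by standard (auto simp: less_eq_wo_def less_wo_def Rep_wo_inject)

end

instance wo :: (finite) wellorder
proof -
  have "wf {(x :: 'a wo, y). x < y}"
    by (auto simp add: trancl_def tranclp_less intro!: finite_acyclic_wf acyclicI)
  then show "OFCLASS('a wo, wellorder_class)"
    by (rule wf_wellorderI) intro_classes
qed

lemma card_wo: "CARD('a::finite wo) = CARD('a)"
  using type_definition.card[OF type_definition_wo] by simp

definition to_wo :: "(real, 'a::finite) vec \<Rightarrow> (real, 'a wo) vec"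
  where "to_wo v = (\<chi> i. v $ Rep_wo i)"

definition from_wo :: "(real, 'a::finite wo) vec \<Rightarrow> (real, 'a) vec"
  where "from_wo w = (\<chi> j. w $ Abs_wo j)"

lemma from_wo_to_wo [simp]: "from_wo (to_wo v) = v"
  by (simp add: from_wo_def to_wo_def vec_eq_iff Abs_wo_inverse)

lemma to_wo_from_wo [simp]: "to_wo (from_wo w) = w"
  by (simp add: from_wo_def to_wo_def vec_eq_iff Rep_wo_inverse)

lemma linear_to_wo: "linear to_wo"
  by (rule linearI) (simp_all add: to_wo_def vec_eq_iff)

lemma linear_from_wo: "linear from_wo"
  by (rule linearI) (simp_all add: from_wo_def vec_eq_iff)

lemma distr_lborel_from_wo: "distr lborel borel (from_wo :: (real, 'a::finite wo) vec \<Rightarrow> _) = lborel"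
proof -
  have "bij (Abs_wo :: 'a \<Rightarrow> 'a wo)"
    by (metis Abs_wo_inverse Rep_wo_inverse UNIV_I bij_betw_byWitness subset_UNIV)
  then show ?thesis
    unfolding from_wo_def[abs_def] by (rule distr_lborel_vec_reindex)
qed

lemma inj_to_wo: "inj to_wo"
  by (metis from_wo_to_wo injI)

lemma image_to_wo: "to_wo ` S = from_wo -` S"
  by (force simp: image_iff)

lemma Avg_to_wo:
  assumes "S \<in> sets borel"
  shows "Avg f S = Avg (\<lambda>w. f (from_wo w)) (to_wo ` S)"
proof -
  have "to_wo ` S \<in> sets borel"
    unfolding image_to_wo using measurable_sets[OF borel_measurable_linear[OF linear_from_wo] assms]
    by simp
  then show ?thesis
    using Avg_measure_preserving_image[of from_wo to_wo "to_wo ` S" f] distr_lborel_from_wo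
      borel_measurable_linear[OF linear_to_wo] borel_measurable_linear[OF linear_from_wo]
    by (simp add: image_image)
qed

lemma convex_on_to_wo:
  assumes "convex_on S f"
  shows "convex_on (to_wo ` S) (\<lambda>w. f (from_wo w))"
  unfolding image_to_wo by (rule convex_on_linear_vimage[OF linear_from_wo assms])

theorem corollary11:
  fixes x :: "nat \<Rightarrow> real ^ 'n"
    and f :: "real ^ 'n \<Rightarrow> real"
  defines "n \<equiv> CARD('n)"
  defines "\<Delta> \<equiv> convex hull (x ` {0..n})"
  assumes inj: "inj_on x {0..n}"
    and aff: "\<not> affine_dependent (x ` {0..n})"
    and cvx: "convex_on \<Delta> f"
  shows "Avg f \<Delta> \<le>
      (real ((n + 1) div 2) / real (n + 1)) *
        ((1 / real ((n + 1) choose 2)) *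
          (\<Sum>j\<in>{0..n}. \<Sum>i\<in>{0..<j}. f ((x i + x j) /\<^sub>R 2)))
    + (real_of_int \<lceil>real (n + 1) / 2\<rceil> / real (n + 1)) *
        ((\<Sum>i\<in>{0..n}. f (x i)) / real (n + 1))"
proof -
  define y where "y k = to_wo (x k)" for k
  define g where "g w = f (from_wo w)" for w
  have y_image: "y ` {0..n} = to_wo ` x ` {0..n}"
    by (auto simp: y_def)
  have hull: "convex hull (y ` {0..n}) = to_wo ` \<Delta>"
    unfolding \<Delta>_def y_image by (rule convex_hull_linear_image[OF linear_to_wo, symmetric])
  have "Avg f \<Delta> = Avg g (to_wo ` \<Delta>)"
    unfolding g_def[abs_def] \<Delta>_def
    by (intro Avg_to_wo borel_closed compact_imp_closed compact_convex_hull finite_imp_compact) simp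
  moreover have "inj_on y {0..n}"
    using inj inj_to_wo by (auto simp: y_def inj_on_def)
  moreover have "\<not> affine_dependent (y ` {0..n})"
    unfolding y_image by (rule affine_independent_linear_image[OF linear_to_wo inj_to_wo aff])
  moreover have "convex_on (to_wo ` \<Delta>) g"
    unfolding g_def[abs_def] by (rule convex_on_to_wo[OF cvx])
  ultimately show ?thesis
    using Avg_le_vertices_midpoints_wellorder[of y g, unfolded card_wo, folded n_def, unfolded hull]
    by (simp add: g_def y_def linear_add[OF linear_to_wo, symmetric]
        linear_scale[OF linear_to_wo, symmetric])
qed

end
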